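(* Let $\beta>1/2$ and let $Y$ be a random variable with density $g_\beta(x)=c_\beta(1+|x|)^{-2\beta}$, $x\in\mathbb R$. Then for every $1\le p<\infty$ and every smooth $\phi:\mathbb R\to\mathbb R$ with $E[|\phi(Y)|^p]<\infty$, $$E\big[|\phi(Y)-E(\phi(Y))|^p\big]\le\Big(\frac{2p}{2\beta-1}\Big)^p E\big[(1+|Y|)^p|\phi'(Y)|^p\big],$$ and, if moreover $\phi(0)=0$, $$E\big[|\phi(Y)|^p\big]\le\Big(\frac{p}{2\beta-1}\Big)^p E\big[(1+|Y|)^p|\phi'(Y)|^p\big].$$
   Context: $c_\beta>0$ is the normalizing constant making $g_\beta$ a probability density on $\mathbb R$. *)

theory Defs
  imports "HOL-Probability.Probability"
begin

definition cbeta :: "real \<Rightarrow> real" where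
  "cbeta \<beta> = 1 / (LINT x|lborel. (1 + \<bar>x\<bar>) powr (-2 * \<beta>))"

definition gbeta :: "real \<Rightarrow> real \<Rightarrow> real" where
  "gbeta \<beta> x = cbeta \<beta> * (1 + \<bar>x\<bar>) powr (-2 * \<beta>)"

definition smooth_real :: "(real \<Rightarrow> real) \<Rightarrow> bool" where
  "smooth_real f \<longleftrightarrow> (\<forall>n x. ((deriv ^^ n) f) differentiable (at x))"

end

theory Submission
  imports Defs
begin

text \<open>If \<open>f 0 = 0\<close>, then \<open>\<bar>f x\<bar>\<^sup>p \<le> \<integral>\<^sub>0\<^sup>x p \<bar>f\<bar>\<^sup>p\<^sup>-\<^sup>1 \<bar>f'\<bar>\<close>. Integrating this against the weight
  \<open>w(x) = (1 + \<bar>x\<bar>)\<^sup>-\<^sup>2\<^sup>\<beta>\<close> over \<open>[0, \<infinity>)\<close> and exchanging the order of integration replaces \<open>w\<close> by its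
  tail \<open>\<integral>\<^sub>t\<^sup>\<infinity> w = (1 + t) w(t) / (2\<beta> - 1)\<close>. Young's inequality with a free parameter \<open>l\<close> bounds
  the resulting integrand by \<open>l\<close>-multiples of \<open>w \<bar>f\<bar>\<^sup>p\<close> and of \<open>w (1 + \<bar>x\<bar>)\<^sup>p \<bar>f'\<bar>\<^sup>p\<close>; as
  \<open>\<integral> w \<bar>f\<bar>\<^sup>p\<close> is finite, the first term can be absorbed, and the optimal \<open>l\<close> yields the constant
  \<open>(p / (2\<beta> - 1))\<^sup>p\<close>. Reflection \<open>x \<mapsto> -x\<close> covers the negative half-line. The centred inequality
  follows by applying this to \<open>\<phi> - \<phi> 0\<close>: by \<open>\<bar>a - b\<bar>\<^sup>p \<le> 2\<^sup>p\<^sup>-\<^sup>1 (\<bar>a\<bar>\<^sup>p + \<bar>b\<bar>\<^sup>p)\<close> and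
  Jensen's inequality, recentring at the mean costs at most a factor \<open>2\<^sup>p\<close>.\<close>

lemma Young_inequality_scaled:
  fixes a b p l :: real
  assumes "a \<ge> 0" "b \<ge> 0" "p > 1" "l > 0"
  shows "a powr (p - 1) * b \<le> (p - 1) / p * l * a powr p + 1 / p * l powr (1 - p) * b powr p"
proof (cases "a = 0 \<or> b = 0")
  case True
  then show ?thesis using assms by (auto intro!: add_nonneg_nonneg mult_nonneg_nonneg)
next
  case False
  hence a: "a > 0" and b: "b > 0" using assms by auto
  have "(l * a powr p) powr ((p - 1) / p) * (l powr (1 - p) * b powr p) powr (1 / p)
        \<le> (p - 1) / p * (l * a powr p) + 1 / p * (l powr (1 - p) * b powr p)"
    using assms a b by (intro Youngs_inequality_0) (auto simp: field_simps)
  moreover have "(l * a powr p) powr ((p - 1) / p) * (l powr (1 - p) * b powr p) powr (1 / p)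
      = l powr ((p - 1) / p + (1 - p) / p) * (a powr (p - 1) * b)"
    using assms a b by (simp add: powr_mult powr_powr powr_add)
  moreover have "(p - 1) / p + (1 - p) / p = 0"
    using assms by (simp add: field_simps)
  ultimately show ?thesis using assms by (simp add: algebra_simps)
qed

lemma powr_tangent_le:
  fixes x m p :: real
  assumes "x \<ge> 0" "m \<ge> 0" "p \<ge> 1"
  shows "p * m powr (p - 1) * x \<le> x powr p + (p - 1) * m powr p"
proof (cases "p = 1")
  case False
  hence p: "p > 1" using assms by auto
  have "p * (m powr (p - 1) * x) \<le> p * ((p - 1) / p * m powr p + 1 / p * x powr p)"
    using Young_inequality_scaled[of m x p 1] assms p by (intro mult_left_mono) auto
  also have "\<dots> = x powr p + (p - 1) * m powr p"
    using p by (simp add: field_simps)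
  finally show ?thesis by (simp only: mult.assoc)
qed (use assms in auto)

lemma abs_diff_powr_le:
  fixes u v p :: real
  assumes p: "p \<ge> 1"
  shows "\<bar>u - v\<bar> powr p \<le> 2 powr (p - 1) * (\<bar>u\<bar> powr p + \<bar>v\<bar> powr p)"
proof -
  define m where "m = (\<bar>u\<bar> + \<bar>v\<bar>) / 2"
  have m: "m \<ge> 0" unfolding m_def by auto
  have "p * m powr (p - 1) * (2 * m) = 2 * p * m powr p"
    using m by (cases "m = 0") (auto simp: powr_diff)
  hence "2 * p * m powr p \<le> \<bar>u\<bar> powr p + \<bar>v\<bar> powr p + 2 * (p - 1) * m powr p"
    using powr_tangent_le[of "\<bar>u\<bar>" m p] powr_tangent_le[of "\<bar>v\<bar>" m p] p m
    unfolding m_def by (simp add: algebra_simps)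
  hence "2 * m powr p \<le> \<bar>u\<bar> powr p + \<bar>v\<bar> powr p"
    by (simp add: algebra_simps)
  moreover have "\<bar>u - v\<bar> powr p \<le> (2 * m) powr p"
    using p m abs_triangle_ineq4[of u v] unfolding m_def by (intro powr_mono2) auto
  moreover have "(2 * m) powr p = 2 powr (p - 1) * (2 * m powr p)"
    using m by (simp add: powr_mult powr_diff)
  ultimately show ?thesis
    by (smt (verit) mult_left_mono powr_ge_zero)
qed

lemma le_powr_mult_if_Young_bounded:
  fixes a b p K :: real
  assumes p: "p \<ge> 1" and K: "K > 0" and a: "a \<ge> 0" and b: "b \<ge> 0"
    and bound: "\<And>l. l > 0 \<Longrightarrow> a \<le> K * ((p - 1) / p) * l * a + K / p * l powr (1 - p) * b"
  shows "a \<le> K powr p * b"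
proof -
  consider "p = 1" | "p > 1" "a = 0" | "p > 1" "a > 0" "b = 0" | "p > 1" "a > 0" "b > 0"
    using p a b by fastforce
  then show ?thesis
  proof cases
    case 1
    then show ?thesis using bound[of 1] K by simp
  next
    case 2
    then show ?thesis using K b by simp
  next
    case 3
    have "a \<le> K * ((p - 1) / p) * (p / (2 * K * (p - 1))) * a"
      using bound[of "p / (2 * K * (p - 1))"] 3 K by simp
    also have "\<dots> = a / 2" using 3 K by (simp add: field_simps)
    finally show ?thesis using 3 by simp
  next
    case 4
    define \<alpha> where "\<alpha> = a powr (1 / p)"
    define \<gamma> where "\<gamma> = b powr (1 / p)"
    have pos: "\<alpha> > 0" "\<gamma> > 0" using 4 unfolding \<alpha>_def \<gamma>_def by auto
    have a_eq: "a = \<alpha> powr (p - 1) * \<alpha>" and b_eq: "b = \<gamma> powr (p - 1) * \<gamma>"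
      using 4 pos unfolding \<alpha>_def \<gamma>_def by (simp_all add: powr_powr powr_diff)
    \<comment> \<open>The choice \<open>l = (b / a) powr (1 / p)\<close> minimises the right-hand side of the bound.\<close>
    have "(\<gamma> / \<alpha>) powr (1 - p) = \<alpha> powr (p - 1) / \<gamma> powr (p - 1)"
      using pos by (simp add: powr_divide powr_diff)
    hence "a \<le> K * ((p - 1) / p) * (\<alpha> powr (p - 1) * \<gamma>) + K / p * (\<alpha> powr (p - 1) * \<gamma>)"
      using bound[of "\<gamma> / \<alpha>"] pos by (simp add: a_eq b_eq mult_ac)
    also have "\<dots> = \<alpha> powr (p - 1) * (K * \<gamma>)"
      using 4 by (simp add: field_simps)
    finally have "\<alpha> \<le> K * \<gamma>"
      using pos by (simp add: a_eq mult_le_cancel_left_pos)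
    hence "\<alpha> powr p \<le> (K * \<gamma>) powr p"
      using pos 4 by (intro powr_mono2) auto
    thus ?thesis
      using 4 K pos unfolding \<alpha>_def \<gamma>_def by (simp add: powr_mult powr_powr)
  qed
qed

lemma DERIV_abs_powr:
  fixes f :: "real \<Rightarrow> real"
  assumes f: "(f has_real_derivative D) (at t)" and ft: "f t \<noteq> 0"
  shows "((\<lambda>y. \<bar>f y\<bar> powr p) has_real_derivative p * \<bar>f t\<bar> powr (p - 1) * sgn (f t) * D) (at t)"
proof -
  have "(f \<longlongrightarrow> f t) (nhds t)"
    using DERIV_continuous[OF f] by (simp add: isCont_def tendsto_at_iff_tendsto_nhds)
  show ?thesis
  proof (cases "f t > 0")
    case True
    have "eventually (\<lambda>y. f y > 0) (nhds t)"
      using order_tendstoD(1)[OF \<open>(f \<longlongrightarrow> f t) (nhds t)\<close> True] by simp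
    hence "eventually (\<lambda>y. \<bar>f y\<bar> powr p = f y powr p) (nhds t)"
      by eventually_elim auto
    then show ?thesis
      using DERIV_fun_powr[OF f True, of p] True by (subst DERIV_cong_ev[OF refl _ refl]) auto
  next
    case False
    hence neg: "f t < 0" using ft by auto
    have "eventually (\<lambda>y. f y < 0) (nhds t)"
      using order_tendstoD(2)[OF \<open>(f \<longlongrightarrow> f t) (nhds t)\<close> neg] by simp
    hence "eventually (\<lambda>y. \<bar>f y\<bar> powr p = (- f y) powr p) (nhds t)"
      by eventually_elim auto
    moreover have "((\<lambda>y. - f y) has_real_derivative - D) (at t)"
      using f by (intro derivative_intros)
    ultimately show ?thesis
      using DERIV_fun_powr[of "\<lambda>y. - f y" "- D" t p] neg
      by (subst DERIV_cong_ev[OF refl _ refl]) auto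
  qed
qed

text \<open>The factor \<open>\<bar>f t\<bar> powr (p - 1)\<close> is replaced by \<open>1\<close> when \<open>p = 1\<close>: otherwise the
  junk value \<open>0 powr 0 = 0\<close> would make the bound discontinuous at the zeros of \<open>f\<close>.\<close>
definition abs_powr_deriv_bound :: "real \<Rightarrow> (real \<Rightarrow> real) \<Rightarrow> (real \<Rightarrow> real) \<Rightarrow> real \<Rightarrow> real" where
  "abs_powr_deriv_bound p f f' t = p * (if p = 1 then 1 else \<bar>f t\<bar> powr (p - 1)) * \<bar>f' t\<bar>"

lemma abs_powr_deriv_bound_nonneg: "p \<ge> 1 \<Longrightarrow> abs_powr_deriv_bound p f f' t \<ge> 0"
  unfolding abs_powr_deriv_bound_def by auto

lemma continuous_on_abs_powr_deriv_bound:
  assumes "p \<ge> 1" "continuous_on UNIV f" "continuous_on UNIV f'"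
  shows "continuous_on UNIV (abs_powr_deriv_bound p f f')"
  using assms unfolding abs_powr_deriv_bound_def
  by (cases "p = 1") (auto intro!: continuous_intros continuous_on_powr')

lemma abs_powr_deriv_bound_Young:
  assumes p: "p \<ge> 1" and l: "l > 0" and s: "s \<ge> 0"
  shows "abs_powr_deriv_bound p f f' t * s
    \<le> (p - 1) * l * \<bar>f t\<bar> powr p + l powr (1 - p) * (s * \<bar>f' t\<bar>) powr p"
proof (cases "p = 1")
  case False
  have "abs_powr_deriv_bound p f f' t * s = p * (\<bar>f t\<bar> powr (p - 1) * (s * \<bar>f' t\<bar>))"
    using False unfolding abs_powr_deriv_bound_def by (simp add: mult_ac)
  also have "\<dots> \<le> p * ((p - 1) / p * l * \<bar>f t\<bar> powr p + 1 / p * l powr (1 - p) * (s * \<bar>f' t\<bar>) powr p)"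
    using Young_inequality_scaled[of "\<bar>f t\<bar>" "s * \<bar>f' t\<bar>" p l] False p l s
    by (intro mult_left_mono) auto
  also have "\<dots> = (p - 1) * l * \<bar>f t\<bar> powr p + l powr (1 - p) * (s * \<bar>f' t\<bar>) powr p"
    using p by (simp add: field_simps)
  finally show ?thesis .
qed (use s l in \<open>simp add: abs_powr_deriv_bound_def\<close>)

lemma last_zero_before:
  fixes f :: "real \<Rightarrow> real"
  assumes f: "continuous_on {c..x} f" and "c \<le> x" "f c = 0" "f x \<noteq> 0"
  obtains a where "c \<le> a" "a < x" "f a = 0" "\<And>t. a < t \<Longrightarrow> t \<le> x \<Longrightarrow> f t \<noteq> 0"
proof -
  define Z where "Z = {c..x} \<inter> f -` {0}"
  have "closed Z"
    unfolding Z_def using f by (intro continuous_closed_preimage) auto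
  moreover have "c \<in> Z" "bdd_above Z"
    using assms unfolding Z_def by (auto intro: bdd_aboveI[of _ x])
  ultimately have "Sup Z \<in> Z"
    using closed_contains_Sup by blast
  moreover have "t \<notin> Z" if "Sup Z < t" for t
    using that cSup_upper[OF _ \<open>bdd_above Z\<close>] by fastforce
  ultimately show ?thesis
    using assms that[of "Sup Z"] unfolding Z_def by (fastforce simp: order.order_iff_strict)
qed

lemma abs_powr_le_integral_deriv_bound:
  fixes f f' :: "real \<Rightarrow> real"
  assumes p: "p \<ge> 1" and der: "\<And>x. (f has_real_derivative f' x) (at x)"
    and cf': "continuous_on UNIV f'" and "f c = 0" "c \<le> x"
  shows "\<bar>f x\<bar> powr p \<le> integral {c..x} (abs_powr_deriv_bound p f f')"
proof -
  have cf: "continuous_on UNIV f"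
    using der by (rule has_real_derivative_imp_continuous_on)
  have intg: "abs_powr_deriv_bound p f f' integrable_on {u..v}" for u v
    using continuous_on_abs_powr_deriv_bound[OF p cf cf']
    by (blast intro: integrable_continuous_interval continuous_on_subset)
  show ?thesis
  proof (cases "f x = 0")
    case True
    then show ?thesis
      using p by (auto intro!: integral_nonneg intg abs_powr_deriv_bound_nonneg)
  next
    case False
    then obtain a where a: "c \<le> a" "a < x" "f a = 0" and nz: "\<And>t. a < t \<Longrightarrow> t \<le> x \<Longrightarrow> f t \<noteq> 0"
      using last_zero_before[of c x f] continuous_on_subset[OF cf] assms by blast
    define d where "d t = p * \<bar>f t\<bar> powr (p - 1) * sgn (f t) * f' t" for t
    have "(d has_integral (\<bar>f x\<bar> powr p - \<bar>f a\<bar> powr p)) {a..x}"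
    proof (rule fundamental_theorem_of_calculus_interior)
      show "continuous_on {a..x} (\<lambda>t. \<bar>f t\<bar> powr p)"
        using p by (intro continuous_on_powr' continuous_intros continuous_on_subset[OF cf]) auto
      show "((\<lambda>t. \<bar>f t\<bar> powr p) has_vector_derivative d t) (at t)" if "t \<in> {a<..<x}" for t
        unfolding d_def has_real_derivative_iff_has_vector_derivative[symmetric]
        using DERIV_abs_powr[OF der nz] that by auto
    qed (use a in auto)
    hence "(d has_integral \<bar>f x\<bar> powr p) {a..x}"
      using a p by simp
    moreover have "d t \<le> abs_powr_deriv_bound p f f' t" for t
    proof (cases "f t = 0")
      case False
      have sgn: "sgn (f t) * f' t \<le> \<bar>f' t\<bar>"
        by (auto simp: sgn_if)
      hence "p * \<bar>f t\<bar> powr (p - 1) * (sgn (f t) * f' t) \<le> p * \<bar>f t\<bar> powr (p - 1) * \<bar>f' t\<bar>"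
        using p by (intro mult_left_mono) auto
      then show ?thesis
        using False sgn unfolding d_def abs_powr_deriv_bound_def by (simp add: mult.assoc)
    qed (use p in \<open>simp add: d_def abs_powr_deriv_bound_nonneg\<close>)
    ultimately have "\<bar>f x\<bar> powr p \<le> integral {a..x} (abs_powr_deriv_bound p f f')"
      by (intro has_integral_le[OF _ integrable_integral[OF intg]])
    also have "\<dots> \<le> integral {c..x} (abs_powr_deriv_bound p f f')"
      using a p by (intro integral_subset_le intg) (auto intro: abs_powr_deriv_bound_nonneg)
    finally show ?thesis .
  qed
qed

lemma abs_powr_le_nn_integral_deriv_bound:
  fixes f f' :: "real \<Rightarrow> real"
  assumes p: "p \<ge> 1" and der: "\<And>x. (f has_real_derivative f' x) (at x)"
    and cf': "continuous_on UNIV f'" and "f c = 0" "c \<le> x"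
  shows "ennreal (\<bar>f x\<bar> powr p)
    \<le> (\<integral>\<^sup>+t. ennreal (abs_powr_deriv_bound p f f' t) * indicator {c..x} t \<partial>lborel)"
proof -
  let ?g = "abs_powr_deriv_bound p f f'"
  have cg: "continuous_on UNIV ?g"
    using continuous_on_abs_powr_deriv_bound[OF p has_real_derivative_imp_continuous_on[OF der] cf'] .
  have "(?g has_integral integral {c..x} ?g) {c..x}"
    using cg by (blast intro: integrable_continuous_interval continuous_on_subset)
  hence "((\<lambda>t. if t \<in> {c..x} then ?g t else 0) has_integral integral {c..x} ?g) UNIV"
    by (simp only: has_integral_restrict_UNIV)
  moreover have "(\<lambda>t. if t \<in> {c..x} then ?g t else 0) = (\<lambda>t. ?g t * indicator {c..x} t)"
    by (auto simp: indicator_def)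
  ultimately have "(\<integral>\<^sup>+t. ennreal (?g t * indicator {c..x} t) \<partial>lborel) = integral {c..x} ?g"
    using borel_measurable_continuous_onI[OF cg]
    by (intro nn_integral_has_integral_lborel) (auto intro!: mult_nonneg_nonneg abs_powr_deriv_bound_nonneg p)
  then show ?thesis
    using abs_powr_le_integral_deriv_bound[OF assms]
    by (simp add: ennreal_leI ennreal_mult' abs_powr_deriv_bound_nonneg[OF p] flip: ennreal_indicator)
qed

definition wbeta :: "real \<Rightarrow> real \<Rightarrow> real" where
  "wbeta \<beta> x = (1 + \<bar>x\<bar>) powr (-2 * \<beta>)"

lemma gbeta_eq_cbeta_wbeta: "gbeta \<beta> x = cbeta \<beta> * wbeta \<beta> x"
  unfolding gbeta_def wbeta_def ..

lemma wbeta_pos: "wbeta \<beta> x > 0"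
  unfolding wbeta_def by simp

lemma wbeta_minus [simp]: "wbeta \<beta> (- x) = wbeta \<beta> x"
  unfolding wbeta_def by simp

lemma borel_measurable_wbeta [measurable]: "wbeta \<beta> \<in> borel_measurable borel"
  unfolding wbeta_def by measurable

lemma nn_integral_wbeta_atLeast:
  assumes \<beta>: "\<beta> > 1/2" and t: "t \<ge> 0"
  shows "(\<integral>\<^sup>+x. ennreal (wbeta \<beta> x) * indicator {t..} x \<partial>lborel)
    = ennreal ((1 + t) powr (1 - 2 * \<beta>) / (2 * \<beta> - 1))"
proof -
  define F where "F x = - ((1 + x) powr (1 - 2 * \<beta>)) / (2 * \<beta> - 1)" for x
  have "(\<integral>\<^sup>+x. ennreal (wbeta \<beta> x) * indicator {t..} x \<partial>lborel) = ennreal (0 - F t)"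
  proof (rule nn_integral_FTC_atLeast)
    fix x assume "t \<le> x"
    with t have "((\<lambda>x. (1 + x) powr (1 - 2 * \<beta>)) has_real_derivative
        (1 - 2 * \<beta>) * (1 + x) powr (1 - 2 * \<beta> - 1) * 1) (at x)"
      by (intro DERIV_fun_powr derivative_eq_intros) auto
    hence "(F has_real_derivative - ((1 - 2 * \<beta>) * (1 + x) powr (1 - 2 * \<beta> - 1) * 1) / (2 * \<beta> - 1)) (at x)"
      unfolding F_def by (intro DERIV_cdivide DERIV_minus)
    moreover have "- ((1 - 2 * \<beta>) * (1 + x) powr (1 - 2 * \<beta> - 1) * 1) / (2 * \<beta> - 1) = wbeta \<beta> x"
      unfolding wbeta_def using \<beta> \<open>t \<le> x\<close> t by (simp add: divide_simps algebra_simps)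
    ultimately show "(F has_real_derivative wbeta \<beta> x) (at x)"
      by simp
    show "0 \<le> wbeta \<beta> x"
      using wbeta_pos less_imp_le by blast
  next
    have "((\<lambda>x. (1 + x) powr (1 - 2 * \<beta>)) \<longlongrightarrow> 0) at_top"
      using \<beta> by (intro tendsto_neg_powr filterlim_tendsto_add_at_top[OF tendsto_const filterlim_ident]) auto
    from tendsto_divide[OF tendsto_minus[OF this] tendsto_const, of "2 * \<beta> - 1"]
    show "(F \<longlongrightarrow> 0) at_top"
      unfolding F_def using \<beta> by simp
  qed simp
  then show ?thesis
    unfolding F_def by simp
qed

lemma nn_integral_swap_triangle:
  fixes w g :: "real \<Rightarrow> ennreal"
  assumes [measurable]: "w \<in> borel_measurable borel" "g \<in> borel_measurable borel"
  shows "(\<integral>\<^sup>+x. w x * indicator {0..} x * (\<integral>\<^sup>+t. g t * indicator {0..x} t \<partial>lborel) \<partial>lborel)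
    = (\<integral>\<^sup>+t. g t * indicator {0..} t * (\<integral>\<^sup>+x. w x * indicator {t..} x \<partial>lborel) \<partial>lborel)"
proof -
  have [measurable]: "Measurable.pred (borel \<Otimes>\<^sub>M borel) (\<lambda>x::real \<times> real. snd x \<in> {0..fst x})"
    unfolding atLeastAtMost_iff by measurable
  have "(\<integral>\<^sup>+x. w x * indicator {0..} x * (\<integral>\<^sup>+t. g t * indicator {0..x} t \<partial>lborel) \<partial>lborel)
      = (\<integral>\<^sup>+x. \<integral>\<^sup>+t. w x * indicator {0..} x * (g t * indicator {0..x} t) \<partial>lborel \<partial>lborel)"
    by (intro nn_integral_cong nn_integral_cmult[symmetric]) measurable
  also have "\<dots> = (\<integral>\<^sup>+t. \<integral>\<^sup>+x. w x * indicator {0..} x * (g t * indicator {0..x} t) \<partial>lborel \<partial>lborel)"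
    by (rule lborel_pair.Fubini'[symmetric]) measurable
  also have "\<dots> = (\<integral>\<^sup>+t. \<integral>\<^sup>+x. g t * indicator {0..} t * (w x * indicator {t..} x) \<partial>lborel \<partial>lborel)"
    by (intro nn_integral_cong) (auto split: split_indicator simp: mult_ac)
  also have "\<dots> = (\<integral>\<^sup>+t. g t * indicator {0..} t * (\<integral>\<^sup>+x. w x * indicator {t..} x \<partial>lborel) \<partial>lborel)"
    by (intro nn_integral_cong nn_integral_cmult) measurable
  finally show ?thesis .
qed

lemma abs_powr_deriv_bound_wbeta_tail_le:
  fixes f f' :: "real \<Rightarrow> real"
  assumes p: "p \<ge> 1" and \<beta>: "\<beta> > 1/2" and l: "l > 0"
  defines "K \<equiv> p / (2 * \<beta> - 1)"
  shows "ennreal (abs_powr_deriv_bound p f f' t) * indicator {0..} t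
      * (\<integral>\<^sup>+x. ennreal (wbeta \<beta> x) * indicator {t..} x \<partial>lborel)
    \<le> ennreal (K * ((p - 1) / p) * l) * (ennreal (wbeta \<beta> t * \<bar>f t\<bar> powr p) * indicator {0..} t)
      + ennreal (K / p * l powr (1 - p))
        * (ennreal (wbeta \<beta> t * ((1 + \<bar>t\<bar>) powr p * \<bar>f' t\<bar> powr p)) * indicator {0..} t)"
proof (cases "t \<ge> 0")
  case True
  let ?g = "abs_powr_deriv_bound p f f'"
  have K: "K > 0"
    unfolding K_def using p \<beta> by simp
  have "(1 + t) powr (1 - 2 * \<beta>) = (1 + t) * wbeta \<beta> t"
    unfolding wbeta_def using True powr_add[of "1 + t" 1 "-2 * \<beta>"] by simp
  hence "?g t * ((1 + t) powr (1 - 2 * \<beta>) / (2 * \<beta> - 1)) = K / p * wbeta \<beta> t * (?g t * (1 + t))"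
    unfolding K_def using p \<beta> by (simp add: field_simps)
  also have "\<dots> \<le> K / p * wbeta \<beta> t * ((p - 1) * l * \<bar>f t\<bar> powr p + l powr (1 - p) * ((1 + t) * \<bar>f' t\<bar>) powr p)"
    using abs_powr_deriv_bound_Young[OF p l, of "1 + t"] K p True wbeta_pos[of \<beta> t]
    by (intro mult_left_mono) auto
  also have "\<dots> = K * ((p - 1) / p) * l * (wbeta \<beta> t * \<bar>f t\<bar> powr p)
      + K / p * l powr (1 - p) * (wbeta \<beta> t * ((1 + \<bar>t\<bar>) powr p * \<bar>f' t\<bar> powr p))"
    using True p powr_mult[of "1 + t" "\<bar>f' t\<bar>" p] by (simp add: field_simps)
  finally have "ennreal (?g t * ((1 + t) powr (1 - 2 * \<beta>) / (2 * \<beta> - 1)))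
      \<le> ennreal (K * ((p - 1) / p) * l * (wbeta \<beta> t * \<bar>f t\<bar> powr p)
        + K / p * l powr (1 - p) * (wbeta \<beta> t * ((1 + \<bar>t\<bar>) powr p * \<bar>f' t\<bar> powr p)))"
    by (rule ennreal_leI)
  then show ?thesis
    using True nn_integral_wbeta_atLeast[OF \<beta> True] abs_powr_deriv_bound_nonneg[OF p] K p l wbeta_pos[of \<beta> t]
    by (simp add: ennreal_mult'[symmetric] ennreal_plus[symmetric] ennreal_mult[symmetric] del: ennreal_plus)
qed simp

lemma wbeta_half_line_Young_bound:
  fixes f f' :: "real \<Rightarrow> real"
  assumes p: "p \<ge> 1" and \<beta>: "\<beta> > 1/2" and der: "\<And>x. (f has_real_derivative f' x) (at x)"
    and cf': "continuous_on UNIV f'" and f0: "f 0 = 0" and l: "l > 0"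
  defines "K \<equiv> p / (2 * \<beta> - 1)"
  shows "(\<integral>\<^sup>+x. ennreal (wbeta \<beta> x * \<bar>f x\<bar> powr p) * indicator {0..} x \<partial>lborel)
    \<le> ennreal (K * ((p - 1) / p) * l)
        * (\<integral>\<^sup>+x. ennreal (wbeta \<beta> x * \<bar>f x\<bar> powr p) * indicator {0..} x \<partial>lborel)
      + ennreal (K / p * l powr (1 - p))
        * (\<integral>\<^sup>+x. ennreal (wbeta \<beta> x * ((1 + \<bar>x\<bar>) powr p * \<bar>f' x\<bar> powr p)) * indicator {0..} x \<partial>lborel)"
proof -
  let ?g = "abs_powr_deriv_bound p f f'"
  have cf: "continuous_on UNIV f"
    using der by (rule has_real_derivative_imp_continuous_on)
  have [measurable]: "f \<in> borel_measurable borel" "f' \<in> borel_measurable borel" "?g \<in> borel_measurable borel"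
    using cf cf' continuous_on_abs_powr_deriv_bound[OF p cf cf'] by (auto intro: borel_measurable_continuous_onI)
  have "(\<integral>\<^sup>+x. ennreal (wbeta \<beta> x * \<bar>f x\<bar> powr p) * indicator {0..} x \<partial>lborel)
      \<le> (\<integral>\<^sup>+x. ennreal (wbeta \<beta> x) * indicator {0..} x
            * (\<integral>\<^sup>+t. ennreal (?g t) * indicator {0..x} t \<partial>lborel) \<partial>lborel)"
    using abs_powr_le_nn_integral_deriv_bound[OF p der cf' f0] wbeta_pos
    by (intro nn_integral_mono) (auto simp: ennreal_mult less_imp_le intro!: mult_left_mono split: split_indicator)
  also have "\<dots> = (\<integral>\<^sup>+t. ennreal (?g t) * indicator {0..} t
            * (\<integral>\<^sup>+x. ennreal (wbeta \<beta> x) * indicator {t..} x \<partial>lborel) \<partial>lborel)"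
    by (rule nn_integral_swap_triangle) measurable
  also have "\<dots> \<le> (\<integral>\<^sup>+t. ennreal (K * ((p - 1) / p) * l) * (ennreal (wbeta \<beta> t * \<bar>f t\<bar> powr p) * indicator {0..} t)
      + ennreal (K / p * l powr (1 - p))
        * (ennreal (wbeta \<beta> t * ((1 + \<bar>t\<bar>) powr p * \<bar>f' t\<bar> powr p)) * indicator {0..} t) \<partial>lborel)"
    unfolding K_def by (intro nn_integral_mono abs_powr_deriv_bound_wbeta_tail_le p \<beta> l)
  also have "\<dots> = ennreal (K * ((p - 1) / p) * l)
        * (\<integral>\<^sup>+x. ennreal (wbeta \<beta> x * \<bar>f x\<bar> powr p) * indicator {0..} x \<partial>lborel)
      + ennreal (K / p * l powr (1 - p))
        * (\<integral>\<^sup>+x. ennreal (wbeta \<beta> x * ((1 + \<bar>x\<bar>) powr p * \<bar>f' x\<bar> powr p)) * indicator {0..} x \<partial>lborel)"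
    by (simp add: nn_integral_add nn_integral_cmult)
  finally show ?thesis .
qed

lemma ennreal_le_powr_mult_if_Young_bounded:
  fixes A B :: ennreal and p K :: real
  assumes p: "p \<ge> 1" and K: "K > 0" and A: "A < \<infinity>"
    and bound: "\<And>l. l > 0 \<Longrightarrow> A \<le> ennreal (K * ((p - 1) / p) * l) * A + ennreal (K / p * l powr (1 - p)) * B"
  shows "A \<le> ennreal (K powr p) * B"
proof (cases "B = \<infinity>")
  case True
  then show ?thesis using K by (simp add: ennreal_mult_top)
next
  case False
  then obtain b where b: "B = ennreal b" "b \<ge> 0" by (cases B) auto
  obtain a where a: "A = ennreal a" "a \<ge> 0" using A by (cases A) auto
  have "a \<le> K powr p * b"
  proof (rule le_powr_mult_if_Young_bounded[OF p K a(2) b(2)])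
    fix l :: real assume l: "l > 0"
    have "ennreal a \<le> ennreal (K * ((p - 1) / p) * l * a + K / p * l powr (1 - p) * b)"
      using bound[OF l] a b K p l
      by (simp add: ennreal_plus[symmetric] ennreal_mult[symmetric] del: ennreal_plus)
    then show "a \<le> K * ((p - 1) / p) * l * a + K / p * l powr (1 - p) * b"
      using K p l a b by (subst (asm) ennreal_le_iff) (auto intro!: add_nonneg_nonneg mult_nonneg_nonneg)
  qed
  then show ?thesis
    using a b by (simp add: ennreal_leI flip: ennreal_mult)
qed

lemma Hardy_inequality_wbeta_half_line:
  fixes f f' :: "real \<Rightarrow> real"
  assumes p: "p \<ge> 1" and \<beta>: "\<beta> > 1/2" and der: "\<And>x. (f has_real_derivative f' x) (at x)"
    and cf': "continuous_on UNIV f'" and f0: "f 0 = 0"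
    and fin: "(\<integral>\<^sup>+x. ennreal (wbeta \<beta> x * \<bar>f x\<bar> powr p) * indicator {0..} x \<partial>lborel) < \<infinity>"
  shows "(\<integral>\<^sup>+x. ennreal (wbeta \<beta> x * \<bar>f x\<bar> powr p) * indicator {0..} x \<partial>lborel)
    \<le> ennreal ((p / (2 * \<beta> - 1)) powr p)
      * (\<integral>\<^sup>+x. ennreal (wbeta \<beta> x * ((1 + \<bar>x\<bar>) powr p * \<bar>f' x\<bar> powr p)) * indicator {0..} x \<partial>lborel)"
  using p \<beta> fin wbeta_half_line_Young_bound[OF p \<beta> der cf' f0]
  by (intro ennreal_le_powr_mult_if_Young_bounded) auto

lemma nn_integral_lborel_split_reflect:
  fixes h :: "real \<Rightarrow> ennreal"
  assumes [measurable]: "h \<in> borel_measurable borel"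
  shows "(\<integral>\<^sup>+x. h x \<partial>lborel)
    = (\<integral>\<^sup>+x. h x * indicator {0..} x \<partial>lborel) + (\<integral>\<^sup>+x. h (- x) * indicator {0..} x \<partial>lborel)"
proof -
  have "(\<integral>\<^sup>+x. h (- x) * indicator {0..} x \<partial>lborel) = (\<integral>\<^sup>+x. h x * indicator {..0} x \<partial>lborel)"
    using nn_integral_real_affine[of "\<lambda>x. h x * indicator {..0} x" "-1" 0]
    by (simp add: indicator_def)
  moreover have "(\<integral>\<^sup>+x. h x \<partial>lborel) = (\<integral>\<^sup>+x. h x * indicator {0..} x + h x * indicator {..0} x \<partial>lborel)"
    by (intro nn_integral_cong_AE eventually_mono[OF AE_lborel_singleton[of 0]])
      (auto split: split_indicator)
  ultimately show ?thesis
    by (simp add: nn_integral_add)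
qed

lemma Hardy_inequality_wbeta:
  fixes f f' :: "real \<Rightarrow> real"
  assumes p: "p \<ge> 1" and \<beta>: "\<beta> > 1/2" and der: "\<And>x. (f has_real_derivative f' x) (at x)"
    and cf': "continuous_on UNIV f'" and f0: "f 0 = 0"
    and fin: "(\<integral>\<^sup>+x. ennreal (wbeta \<beta> x * \<bar>f x\<bar> powr p) \<partial>lborel) < \<infinity>"
  shows "(\<integral>\<^sup>+x. ennreal (wbeta \<beta> x * \<bar>f x\<bar> powr p) \<partial>lborel)
    \<le> ennreal ((p / (2 * \<beta> - 1)) powr p)
      * (\<integral>\<^sup>+x. ennreal (wbeta \<beta> x * ((1 + \<bar>x\<bar>) powr p * \<bar>f' x\<bar> powr p)) \<partial>lborel)"
proof -
  have [measurable]: "f \<in> borel_measurable borel" "f' \<in> borel_measurable borel"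
    using has_real_derivative_imp_continuous_on[OF der] cf' by (auto intro: borel_measurable_continuous_onI)
  have der_reflect: "((\<lambda>x. f (- x)) has_real_derivative - f' (- x)) (at x)" for x
    using DERIV_mirror[of f "f' (- x)" x] der[of "- x"] by simp
  have cf'_reflect: "continuous_on UNIV (\<lambda>x. - f' (- x))"
    by (intro continuous_intros continuous_on_compose2[OF cf']) auto
  have A: "(\<integral>\<^sup>+x. ennreal (wbeta \<beta> x * \<bar>f x\<bar> powr p) \<partial>lborel)
      = (\<integral>\<^sup>+x. ennreal (wbeta \<beta> x * \<bar>f x\<bar> powr p) * indicator {0..} x \<partial>lborel)
        + (\<integral>\<^sup>+x. ennreal (wbeta \<beta> x * \<bar>f (- x)\<bar> powr p) * indicator {0..} x \<partial>lborel)"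
    by (subst nn_integral_lborel_split_reflect) simp_all
  have B: "(\<integral>\<^sup>+x. ennreal (wbeta \<beta> x * ((1 + \<bar>x\<bar>) powr p * \<bar>f' x\<bar> powr p)) \<partial>lborel)
      = (\<integral>\<^sup>+x. ennreal (wbeta \<beta> x * ((1 + \<bar>x\<bar>) powr p * \<bar>f' x\<bar> powr p)) * indicator {0..} x \<partial>lborel)
        + (\<integral>\<^sup>+x. ennreal (wbeta \<beta> x * ((1 + \<bar>x\<bar>) powr p * \<bar>- f' (- x)\<bar> powr p)) * indicator {0..} x \<partial>lborel)"
    by (subst nn_integral_lborel_split_reflect) simp_all
  show ?thesis
    using fin Hardy_inequality_wbeta_half_line[OF p \<beta> der cf' f0] Hardy_inequality_wbeta_half_line[OF p \<beta> der_reflect cf'_reflect]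
    unfolding A B by (auto simp: f0 distrib_left intro!: add_mono)
qed

lemma nn_integral_distributed_gbeta:
  fixes M :: "'a measure" and Y :: "'a \<Rightarrow> real" and H :: "real \<Rightarrow> real"
  assumes Y: "distributed M lborel Y (\<lambda>x. ennreal (gbeta \<beta> x))"
    and [measurable]: "H \<in> borel_measurable borel" and H: "\<And>x. H x \<ge> 0"
  shows "(\<integral>\<^sup>+\<omega>. ennreal (H (Y \<omega>)) \<partial>M) = ennreal (cbeta \<beta>) * (\<integral>\<^sup>+x. ennreal (wbeta \<beta> x * H x) \<partial>lborel)"
proof -
  have "(\<integral>\<^sup>+\<omega>. ennreal (H (Y \<omega>)) \<partial>M) = (\<integral>\<^sup>+x. ennreal (gbeta \<beta> x) * ennreal (H x) \<partial>lborel)"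
    by (rule distributed_nn_integral[OF Y, symmetric]) simp
  also have "\<dots> = (\<integral>\<^sup>+x. ennreal (cbeta \<beta>) * ennreal (wbeta \<beta> x * H x) \<partial>lborel)"
    using H wbeta_pos unfolding gbeta_eq_cbeta_wbeta
    by (intro nn_integral_cong) (simp add: ennreal_mult'' less_imp_le mult_ac)
  also have "\<dots> = ennreal (cbeta \<beta>) * (\<integral>\<^sup>+x. ennreal (wbeta \<beta> x * H x) \<partial>lborel)"
    by (rule nn_integral_cmult) simp
  finally show ?thesis .
qed

lemma Hardy_inequality_gbeta:
  fixes M :: "'a measure" and Y :: "'a \<Rightarrow> real" and f f' :: "real \<Rightarrow> real"
  assumes Y: "distributed M lborel Y (\<lambda>x. ennreal (gbeta \<beta> x))"
    and p: "p \<ge> 1" and \<beta>: "\<beta> > 1/2" and der: "\<And>x. (f has_real_derivative f' x) (at x)"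
    and cf': "continuous_on UNIV f'" and f0: "f 0 = 0"
    and fin: "(\<integral>\<^sup>+\<omega>. ennreal (\<bar>f (Y \<omega>)\<bar> powr p) \<partial>M) < \<infinity>"
  shows "(\<integral>\<^sup>+\<omega>. ennreal (\<bar>f (Y \<omega>)\<bar> powr p) \<partial>M)
    \<le> ennreal ((p / (2 * \<beta> - 1)) powr p)
      * (\<integral>\<^sup>+\<omega>. ennreal ((1 + \<bar>Y \<omega>\<bar>) powr p * \<bar>f' (Y \<omega>)\<bar> powr p) \<partial>M)"
proof -
  have [measurable]: "f \<in> borel_measurable borel" "f' \<in> borel_measurable borel"
    using has_real_derivative_imp_continuous_on[OF der] cf' by (auto intro: borel_measurable_continuous_onI)
  have transfer_lhs: "(\<integral>\<^sup>+\<omega>. ennreal (\<bar>f (Y \<omega>)\<bar> powr p) \<partial>M)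
      = ennreal (cbeta \<beta>) * (\<integral>\<^sup>+x. ennreal (wbeta \<beta> x * \<bar>f x\<bar> powr p) \<partial>lborel)"
    by (rule nn_integral_distributed_gbeta[OF Y]) auto
  have transfer_rhs: "(\<integral>\<^sup>+\<omega>. ennreal ((1 + \<bar>Y \<omega>\<bar>) powr p * \<bar>f' (Y \<omega>)\<bar> powr p) \<partial>M)
      = ennreal (cbeta \<beta>) * (\<integral>\<^sup>+x. ennreal (wbeta \<beta> x * ((1 + \<bar>x\<bar>) powr p * \<bar>f' x\<bar> powr p)) \<partial>lborel)"
    by (rule nn_integral_distributed_gbeta[OF Y]) auto
  show ?thesis
  proof (cases "ennreal (cbeta \<beta>) = 0")
    case False
    then show ?thesis
      using fin Hardy_inequality_wbeta[OF p \<beta> der cf' f0] unfolding transfer_lhs transfer_rhs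
      by (auto simp: ennreal_mult_less_top mult.left_commute top.not_eq_extremum intro: mult_left_mono)
  qed (simp add: transfer_lhs transfer_rhs)
qed

lemma nn_integral_abs_diff_powr_le:
  fixes X Z :: "'a \<Rightarrow> real"
  assumes p: "p \<ge> 1" and [measurable]: "X \<in> borel_measurable M" "Z \<in> borel_measurable M"
  shows "(\<integral>\<^sup>+\<omega>. ennreal (\<bar>X \<omega> - Z \<omega>\<bar> powr p) \<partial>M)
    \<le> ennreal (2 powr (p - 1))
      * ((\<integral>\<^sup>+\<omega>. ennreal (\<bar>X \<omega>\<bar> powr p) \<partial>M) + (\<integral>\<^sup>+\<omega>. ennreal (\<bar>Z \<omega>\<bar> powr p) \<partial>M))"
proof -
  have "(\<integral>\<^sup>+\<omega>. ennreal (\<bar>X \<omega> - Z \<omega>\<bar> powr p) \<partial>M)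
      \<le> (\<integral>\<^sup>+\<omega>. ennreal (2 powr (p - 1)) * (ennreal (\<bar>X \<omega>\<bar> powr p) + ennreal (\<bar>Z \<omega>\<bar> powr p)) \<partial>M)"
    using abs_diff_powr_le[OF p]
    by (intro nn_integral_mono) (simp add: ennreal_leI flip: ennreal_plus ennreal_mult)
  also have "\<dots> = ennreal (2 powr (p - 1))
      * ((\<integral>\<^sup>+\<omega>. ennreal (\<bar>X \<omega>\<bar> powr p) \<partial>M) + (\<integral>\<^sup>+\<omega>. ennreal (\<bar>Z \<omega>\<bar> powr p) \<partial>M))"
    by (simp add: nn_integral_cmult nn_integral_add)
  finally show ?thesis .
qed

lemma (in prob_space) integrable_if_nn_integral_abs_powr_finite:
  fixes X :: "'a \<Rightarrow> real"
  assumes p: "p \<ge> 1" and [measurable]: "X \<in> borel_measurable M"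
    and fin: "(\<integral>\<^sup>+\<omega>. ennreal (\<bar>X \<omega>\<bar> powr p) \<partial>M) < \<infinity>"
  shows "integrable M X"
proof (rule integrableI_bounded)
  have "\<bar>y\<bar> \<le> 1 + \<bar>y\<bar> powr p" for y :: real
  proof (cases "\<bar>y\<bar> \<le> 1")
    case False
    then have "\<bar>y\<bar> powr 1 \<le> \<bar>y\<bar> powr p" using p by (intro powr_mono) auto
    then show ?thesis by simp
  qed (smt (verit) powr_ge_zero)
  then have "ennreal (norm (X \<omega>)) \<le> 1 + ennreal (\<bar>X \<omega>\<bar> powr p)" for \<omega>
    by (metis ennreal_leI ennreal_plus ennreal_1 powr_ge_zero real_norm_def zero_le_one)
  then have "(\<integral>\<^sup>+\<omega>. ennreal (norm (X \<omega>)) \<partial>M) \<le> (\<integral>\<^sup>+\<omega>. 1 + ennreal (\<bar>X \<omega>\<bar> powr p) \<partial>M)"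
    by (intro nn_integral_mono)
  also have "\<dots> = 1 + (\<integral>\<^sup>+\<omega>. ennreal (\<bar>X \<omega>\<bar> powr p) \<partial>M)"
    by (simp add: nn_integral_add emeasure_space_1)
  finally show "(\<integral>\<^sup>+\<omega>. ennreal (norm (X \<omega>)) \<partial>M) < \<infinity>"
    using fin by (simp add: order_le_less_trans)
qed simp

lemma (in prob_space) abs_expectation_powr_le:
  fixes X :: "'a \<Rightarrow> real"
  assumes p: "p \<ge> 1" and X: "integrable M X" and Xp: "integrable M (\<lambda>\<omega>. \<bar>X \<omega>\<bar> powr p)"
  shows "\<bar>expectation X\<bar> powr p \<le> expectation (\<lambda>\<omega>. \<bar>X \<omega>\<bar> powr p)"
proof -
  define \<mu> where "\<mu> = expectation (\<lambda>\<omega>. \<bar>X \<omega>\<bar>)"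
  have "\<mu> \<ge> 0"
    unfolding \<mu>_def by simp
  \<comment> \<open>Jensen's inequality, integrating the tangent line of \<open>t powr p\<close> at \<open>t = \<mu>\<close>.\<close>
  have "\<mu> powr p \<le> expectation (\<lambda>\<omega>. \<bar>X \<omega>\<bar> powr p)"
  proof (cases "\<mu> = 0")
    case False
    have "expectation (\<lambda>\<omega>. p * \<mu> powr (p - 1) * \<bar>X \<omega>\<bar>) \<le> expectation (\<lambda>\<omega>. \<bar>X \<omega>\<bar> powr p + (p - 1) * \<mu> powr p)"
      using powr_tangent_le[OF _ \<open>\<mu> \<ge> 0\<close> p] X Xp by (intro integral_mono) auto
    moreover have "\<mu> powr (p - 1) * \<mu> = \<mu> powr p"
      using False \<open>\<mu> \<ge> 0\<close> by (simp add: powr_diff)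
    ultimately show ?thesis
      using X Xp unfolding \<mu>_def by (simp add: prob_space algebra_simps)
  qed (use p Xp in \<open>auto intro: integral_nonneg_AE\<close>)
  moreover have "\<bar>expectation X\<bar> powr p \<le> \<mu> powr p"
    unfolding \<mu>_def using p by (intro powr_mono2) auto
  ultimately show ?thesis by linarith
qed

lemma (in prob_space) nn_integral_centered_abs_powr_le:
  fixes X :: "'a \<Rightarrow> real"
  assumes p: "p \<ge> 1" and X: "integrable M X"
  shows "(\<integral>\<^sup>+\<omega>. ennreal (\<bar>X \<omega> - expectation X\<bar> powr p) \<partial>M)
    \<le> ennreal (2 powr p) * (\<integral>\<^sup>+\<omega>. ennreal (\<bar>X \<omega> - c\<bar> powr p) \<partial>M)"
proof (cases "(\<integral>\<^sup>+\<omega>. ennreal (\<bar>X \<omega> - c\<bar> powr p) \<partial>M) = \<infinity>")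
  case False
  define A where "A = (\<integral>\<^sup>+\<omega>. ennreal (\<bar>X \<omega> - c\<bar> powr p) \<partial>M)"
  have [measurable]: "X \<in> borel_measurable M"
    using X by auto
  have Xc: "integrable M (\<lambda>\<omega>. X \<omega> - c)"
    using X by auto
  have Xcp: "integrable M (\<lambda>\<omega>. \<bar>X \<omega> - c\<bar> powr p)"
    using False by (intro integrableI_bounded) (simp_all add: top.not_eq_extremum)
  have "expectation (\<lambda>\<omega>. X \<omega> - c) = expectation X - c"
    using X by (simp add: prob_space)
  then have "ennreal (\<bar>expectation X - c\<bar> powr p) \<le> A"
    using abs_expectation_powr_le[OF p Xc Xcp] Xcp
    unfolding A_def by (simp add: nn_integral_eq_integral prob_space ennreal_leI)
  moreover have "(\<integral>\<^sup>+\<omega>. ennreal (\<bar>X \<omega> - expectation X\<bar> powr p) \<partial>M)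
      \<le> ennreal (2 powr (p - 1)) * (A + ennreal (\<bar>expectation X - c\<bar> powr p))"
    using nn_integral_abs_diff_powr_le[OF p, of "\<lambda>\<omega>. X \<omega> - c" M "\<lambda>_. expectation X - c"]
    unfolding A_def by (simp add: emeasure_space_1)
  ultimately have "(\<integral>\<^sup>+\<omega>. ennreal (\<bar>X \<omega> - expectation X\<bar> powr p) \<partial>M) \<le> ennreal (2 powr (p - 1)) * (2 * A)"
    unfolding mult_2 by (meson order_trans mult_left_mono add_left_mono zero_le)
  also have "\<dots> = ennreal (2 powr (p - 1) * 2) * A"
    by (simp add: ennreal_mult mult.assoc)
  also have "\<dots> = ennreal (2 powr p) * A"
    by (simp add: powr_diff)
  finally show ?thesis unfolding A_def .
qed (simp add: ennreal_mult_top)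

lemma smooth_real_DERIV:
  assumes "smooth_real \<phi>"
  shows "(\<phi> has_real_derivative deriv \<phi> x) (at x)" and "continuous_on UNIV (deriv \<phi>)"
proof -
  have "\<phi> differentiable (at x)" "deriv \<phi> differentiable (at x)" for x
    using assms[unfolded smooth_real_def, rule_format, of 0] assms[unfolded smooth_real_def, rule_format, of 1]
    by simp_all
  then show "(\<phi> has_real_derivative deriv \<phi> x) (at x)" "continuous_on UNIV (deriv \<phi>)"
    by (auto simp: DERIV_deriv_iff_real_differentiable differentiable_imp_continuous_within
        intro!: continuous_at_imp_continuous_on)
qed

theorem mainTheorem10:
  fixes M :: "'a measure" and Y :: "'a \<Rightarrow> real"
    and \<beta> p :: real and \<phi> :: "real \<Rightarrow> real"
  assumes beta: "\<beta> > 1/2"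
    and M: "prob_space M"
    and Y: "distributed M lborel Y (\<lambda>x. ennreal (gbeta \<beta> x))"
    and p: "1 \<le> p"
    and smooth: "smooth_real \<phi>"
    and fin: "(\<integral>\<^sup>+ \<omega>. ennreal (\<bar>\<phi> (Y \<omega>)\<bar> powr p) \<partial>M) < \<infinity>"
  shows "((\<integral>\<^sup>+ \<omega>. ennreal (\<bar>\<phi> (Y \<omega>) - (\<integral> \<omega>'. \<phi> (Y \<omega>') \<partial>M)\<bar> powr p) \<partial>M)
           \<le> ennreal ((2 * p / (2 * \<beta> - 1)) powr p)
              * (\<integral>\<^sup>+ \<omega>. ennreal ((1 + \<bar>Y \<omega>\<bar>) powr p * \<bar>deriv \<phi> (Y \<omega>)\<bar> powr p) \<partial>M))
         \<and> (\<phi> 0 = 0 \<longrightarrow>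
           (\<integral>\<^sup>+ \<omega>. ennreal (\<bar>\<phi> (Y \<omega>)\<bar> powr p) \<partial>M)
           \<le> ennreal ((p / (2 * \<beta> - 1)) powr p)
              * (\<integral>\<^sup>+ \<omega>. ennreal ((1 + \<bar>Y \<omega>\<bar>) powr p * \<bar>deriv \<phi> (Y \<omega>)\<bar> powr p) \<partial>M))"
proof -
  interpret prob_space M by (rule M)
  note der = smooth_real_DERIV(1)[OF smooth] and cf' = smooth_real_DERIV(2)[OF smooth]
  have [measurable]: "\<phi> \<in> borel_measurable borel" "Y \<in> borel_measurable M"
    using has_real_derivative_imp_continuous_on[OF der] distributed_measurable[OF Y]
    by (auto intro: borel_measurable_continuous_onI)
  define B where "B = (\<integral>\<^sup>+\<omega>. ennreal ((1 + \<bar>Y \<omega>\<bar>) powr p * \<bar>deriv \<phi> (Y \<omega>)\<bar> powr p) \<partial>M)"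
  define K where "K = p / (2 * \<beta> - 1)"
  have shifted_fin: "(\<integral>\<^sup>+\<omega>. ennreal (\<bar>\<phi> (Y \<omega>) - \<phi> 0\<bar> powr p) \<partial>M) < \<infinity>"
    using nn_integral_abs_diff_powr_le[OF p, of "\<lambda>\<omega>. \<phi> (Y \<omega>)" M "\<lambda>_. \<phi> 0"] fin
    by (simp add: emeasure_space_1 ennreal_mult_less_top order_le_less_trans)
  have shifted: "(\<integral>\<^sup>+\<omega>. ennreal (\<bar>\<phi> (Y \<omega>) - \<phi> 0\<bar> powr p) \<partial>M) \<le> ennreal (K powr p) * B"
    unfolding K_def B_def
    using der by (intro Hardy_inequality_gbeta[OF Y p beta _ cf' _ shifted_fin] derivative_eq_intros) auto
  have "(\<integral>\<^sup>+\<omega>. ennreal (\<bar>\<phi> (Y \<omega>) - (\<integral>\<omega>'. \<phi> (Y \<omega>') \<partial>M)\<bar> powr p) \<partial>M)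
      \<le> ennreal (2 powr p) * (\<integral>\<^sup>+\<omega>. ennreal (\<bar>\<phi> (Y \<omega>) - \<phi> 0\<bar> powr p) \<partial>M)"
    using integrable_if_nn_integral_abs_powr_finite[OF p _ fin]
    by (intro nn_integral_centered_abs_powr_le p) simp
  also have "\<dots> \<le> ennreal (2 powr p) * (ennreal (K powr p) * B)"
    using shifted by (rule mult_left_mono) simp
  also have "\<dots> = ennreal (2 powr p * K powr p) * B"
    by (simp add: ennreal_mult mult.assoc)
  also have "\<dots> = ennreal ((2 * p / (2 * \<beta> - 1)) powr p) * B"
    using powr_mult[of 2 K p] p beta by (simp add: K_def)
  finally show ?thesis
    using Hardy_inequality_gbeta[OF Y p beta der cf' _ fin] unfolding B_def K_def by simp
qed

end
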